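(* For all $n\ge 1$, $f(n)\ge 2n^2+4n+1$.
   Context: For $n\ge 1$, $A_n$ denotes the finite integral symmetric relation algebra with atoms $1'$, $r$, $b_1,\dots,b_n$, all symmetric, in which a diversity cycle $xyz$ is mandatory (i.e. $x;y\ge z$) if and only if it involves $r$, and forbidden (i.e. $x;y\cdot z=0$) otherwise. A representation over a set $U$ is an embedding into the full relation algebra on $U\times U$. $\operatorname{Spec}(A)$ is the set of cardinals $\alpha\le\omega$ such that $A$ has a representation over a set of cardinality $\alpha$, and $f(n)=\min\operatorname{Spec}(A_n)$. *)

theory Defs
  imports Main "HOL-Library.Extended_Nat"
begin

text \<open>Atoms of the relation algebra A_n: the identity 1', the atom r, and b_1,...,b_n.\<close>
datatype atom = One | R | B nat

definition Atoms :: "nat \<Rightarrow> atom set" where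
  "Atoms n = {One, R} \<union> B ` {1..n}"

definition DivAtoms :: "nat \<Rightarrow> atom set" where
  "DivAtoms n = Atoms n - {One}"

text \<open>Composition of atoms in A_n. 1' is the identity; for diversity atoms x, y,
  x;y contains 1' iff x = y (all atoms are symmetric), and contains a diversity atom z
  iff the cycle xyz is mandatory, i.e. iff it involves r.\<close>
definition atom_comp :: "nat \<Rightarrow> atom \<Rightarrow> atom \<Rightarrow> atom set" where
  "atom_comp n x y =
    (if x = One then {y}
     else if y = One then {x}
     else (if x = y then {One} else {}) \<union> {z \<in> DivAtoms n. x = R \<or> y = R \<or> z = R})"

text \<open>The operations of A_n, whose elements are the subsets of Atoms n.\<close>
definition A_comp :: "nat \<Rightarrow> atom set \<Rightarrow> atom set \<Rightarrow> atom set" where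
  "A_comp n X Y = (\<Union>x\<in>X. \<Union>y\<in>Y. atom_comp n x y)"

definition A_conv :: "atom set \<Rightarrow> atom set" where
  "A_conv X = X"  \<comment> \<open>all atoms are symmetric\<close>

definition A_compl :: "nat \<Rightarrow> atom set \<Rightarrow> atom set" where
  "A_compl n X = Atoms n - X"

definition is_rep :: "nat \<Rightarrow> 'u set \<Rightarrow> (atom set \<Rightarrow> ('u \<times> 'u) set) \<Rightarrow> bool" where
  "is_rep n U h \<longleftrightarrow>
     inj_on h (Pow (Atoms n)) \<and>
     (\<forall>X \<in> Pow (Atoms n). h X \<subseteq> U \<times> U) \<and>
     (\<forall>X \<in> Pow (Atoms n). \<forall>Y \<in> Pow (Atoms n). h (X \<union> Y) = h X \<union> h Y) \<and>
     (\<forall>X \<in> Pow (Atoms n). h (A_compl n X) = (U \<times> U) - h X) \<and>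
     (\<forall>X \<in> Pow (Atoms n). \<forall>Y \<in> Pow (Atoms n). h (A_comp n X Y) = h X O h Y) \<and>
     (\<forall>X \<in> Pow (Atoms n). h (A_conv X) = converse (h X)) \<and>
     h {One} = Id_on U"

text \<open>Spec(A_n): cardinals \<le> \<omega> (as enat, \<infinity> = \<omega>) of base sets of representations.
  Any set of cardinality \<le> \<omega> is in bijection with a subset of nat, so it suffices
  to consider U \<subseteq> nat.\<close>
definition Spec :: "nat \<Rightarrow> enat set" where
  "Spec n = {\<alpha>. \<exists>(U::nat set) h. is_rep n U h \<and>
                 \<alpha> = (if finite U then enat (card U) else \<infinity>)}"

definition f :: "nat \<Rightarrow> enat" where
  "f n = Inf (Spec n)"

end

theory Submission
  imports Defs
begin

text \<open>Fix a point x of a finite representation. Its b-neighbourhood (the union of the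
  b_k(x)) is disjoint from its closed r-neighbourhood {x} \<union> r(x). Each b_k(p) has at least
  n + 2 points: for an r-neighbour w of p, the mandatory cycles b_k \<beta> r give every diversity
  atom \<beta> a point of b_k(p) that is \<beta>-related to w, and w can be chosen so that one of these
  n + 1 classes has two points. For y \<in> b_1(x), all b-neighbours of y lie in {x} \<union> r(x)
  because b_j;b_k \<le> 1' + r, and so does a common r-neighbour of x and y, which is no
  b-neighbour of y. Hence |U| \<ge> (n(n + 2) + 1) + n(n + 2).\<close>

lemma One_mem_Atoms [simp]: "One \<in> Atoms n"
  and R_mem_Atoms [simp]: "R \<in> Atoms n"
  and B_mem_Atoms_iff [simp]: "B k \<in> Atoms n \<longleftrightarrow> k \<in> {1..n}"
  by (auto simp: Atoms_def)

lemma finite_Atoms: "finite (Atoms n)"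
  by (simp add: Atoms_def)

lemma mem_DivAtoms_iff: "a \<in> DivAtoms n \<longleftrightarrow> a \<in> Atoms n \<and> a \<noteq> One"
  by (auto simp: DivAtoms_def)

lemma finite_DivAtoms: "finite (DivAtoms n)"
  by (simp add: DivAtoms_def finite_Atoms)

lemma card_DivAtoms: "card (DivAtoms n) = n + 1"
proof -
  have "DivAtoms n = insert R (B ` {1..n})"
    by (auto simp: DivAtoms_def Atoms_def)
  moreover have "card (B ` {1..n}) = n"
    by (simp add: card_image inj_on_def)
  moreover have "R \<notin> B ` {1..n}" by auto
  ultimately show ?thesis by simp
qed

lemma atom_comp_subset_Atoms: "a \<in> Atoms n \<Longrightarrow> b \<in> Atoms n \<Longrightarrow> atom_comp n a b \<subseteq> Atoms n"
  by (auto simp: atom_comp_def DivAtoms_def)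

lemma One_mem_atom_comp_self: "a \<noteq> One \<Longrightarrow> One \<in> atom_comp n a a"
  by (simp add: atom_comp_def)

lemma R_mem_atom_comp: "a \<noteq> One \<Longrightarrow> b \<noteq> One \<Longrightarrow> R \<in> atom_comp n a b"
  by (simp add: atom_comp_def DivAtoms_def)

lemma mem_atom_comp_R: "a \<noteq> One \<Longrightarrow> c \<in> DivAtoms n \<Longrightarrow> c \<in> atom_comp n a R"
  by (simp add: atom_comp_def)

lemma atom_comp_B_B: "atom_comp n (B j) (B k) \<subseteq> {One, R}"
  by (auto simp: atom_comp_def)

locale A_representation =
  fixes n :: nat and U :: "'u set" and h :: "atom set \<Rightarrow> ('u \<times> 'u) set"
  assumes rep: "is_rep n U h"
begin

lemma h_subset: "X \<subseteq> Atoms n \<Longrightarrow> h X \<subseteq> U \<times> U"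
  using rep by (simp add: is_rep_def)

lemma h_Un: "X \<subseteq> Atoms n \<Longrightarrow> Y \<subseteq> Atoms n \<Longrightarrow> h (X \<union> Y) = h X \<union> h Y"
  using rep by (simp add: is_rep_def)

lemma h_Diff: "X \<subseteq> Atoms n \<Longrightarrow> h (Atoms n - X) = U \<times> U - h X"
  using rep by (simp add: is_rep_def A_compl_def)

lemma h_comp: "X \<subseteq> Atoms n \<Longrightarrow> Y \<subseteq> Atoms n \<Longrightarrow> h (A_comp n X Y) = h X O h Y"
  using rep by (simp add: is_rep_def)

lemma converse_h: "X \<subseteq> Atoms n \<Longrightarrow> converse (h X) = h X"
  using rep by (simp add: is_rep_def A_conv_def)

lemma h_One: "h {One} = Id_on U"
  using rep by (simp add: is_rep_def)

lemma h_mono: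
  assumes "X \<subseteq> Y" "Y \<subseteq> Atoms n"
  shows "h X \<subseteq> h Y"
proof -
  have "h Y = h (X \<union> Y)"
    using assms(1) by (simp add: Un_absorb1)
  also have "\<dots> = h X \<union> h Y"
    using assms by (intro h_Un) auto
  finally show ?thesis by blast
qed

lemma h_empty: "h {} = {}"
  using h_Diff[of "Atoms n"] h_mono[of "{}" "Atoms n"] by auto

lemma h_Atoms: "h (Atoms n) = U \<times> U"
  using h_Diff[of "{}"] by (simp add: h_empty)

lemma U_nonempty: "U \<noteq> {}"
proof
  assume "U = {}"
  have "inj_on h (Pow (Atoms n))"
    using rep by (simp add: is_rep_def)
  moreover have "h {One} = h {}"
    using \<open>U = {}\<close> by (simp add: h_One h_empty)
  ultimately have "{One} = {}"
    by (rule inj_onD) auto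
  then show False by simp
qed

lemma h_atoms_disjoint:
  assumes "a \<in> Atoms n" "b \<in> Atoms n" "a \<noteq> b"
  shows "h {a} \<inter> h {b} = {}"
proof -
  have "h {b} \<subseteq> h (Atoms n - {a})"
    using assms by (intro h_mono) auto
  also have "\<dots> = U \<times> U - h {a}"
    using assms h_Diff by simp
  finally show ?thesis by blast
qed

lemma h_eq_UN_atoms: "finite X \<Longrightarrow> X \<subseteq> Atoms n \<Longrightarrow> h X = (\<Union>a\<in>X. h {a})"
proof (induction X rule: finite_induct)
  case empty
  then show ?case by (simp add: h_empty)
next
  case (insert x X)
  then show ?case
    using h_Un[of "{x}" X] by simp
qed

lemma pair_in_some_atom: "x \<in> U \<Longrightarrow> y \<in> U \<Longrightarrow> \<exists>a\<in>Atoms n. (x, y) \<in> h {a}"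
  using h_eq_UN_atoms[OF finite_Atoms order_refl] h_Atoms by auto

lemma h_atom_comp: "a \<in> Atoms n \<Longrightarrow> b \<in> Atoms n \<Longrightarrow> h (atom_comp n a b) = h {a} O h {b}"
  using h_comp[of "{a}" "{b}"] by (simp add: A_comp_def)

lemma mandatory_triangle:
  assumes "a \<in> Atoms n" "b \<in> Atoms n" "c \<in> atom_comp n a b" "(x, y) \<in> h {c}"
  obtains z where "(x, z) \<in> h {a}" "(z, y) \<in> h {b}"
proof -
  have "h {c} \<subseteq> h (atom_comp n a b)"
    using assms atom_comp_subset_Atoms by (intro h_mono) auto
  with assms that show thesis
    by (auto simp: h_atom_comp)
qed

lemma atom_sym: "a \<in> Atoms n \<Longrightarrow> (x, y) \<in> h {a} \<Longrightarrow> (y, x) \<in> h {a}"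
  using converse_h[of "{a}"] by auto

lemma atom_in_U: "a \<in> Atoms n \<Longrightarrow> (x, y) \<in> h {a} \<Longrightarrow> x \<in> U \<and> y \<in> U"
  using h_subset[of "{a}"] by auto

lemma diversity_irrefl: "a \<in> DivAtoms n \<Longrightarrow> (x, x) \<notin> h {a}"
  using h_atoms_disjoint[of a One] atom_in_U[of a x x] h_One
  by (auto simp: mem_DivAtoms_iff)

lemma B_B_path:
  assumes "j \<in> {1..n}" "k \<in> {1..n}" "(x, y) \<in> h {B j}" "(y, z) \<in> h {B k}"
  shows "x = z \<or> (x, z) \<in> h {R}"
proof -
  have "(x, z) \<in> h (atom_comp n (B j) (B k))"
    using assms by (simp add: h_atom_comp relcomp.relcompI)
  also have "\<dots> \<subseteq> h ({One} \<union> {R})"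
    using atom_comp_B_B by (intro h_mono) auto
  also have "\<dots> = h {One} \<union> h {R}"
    by (intro h_Un) auto
  finally show ?thesis
    by (auto simp: h_One)
qed

definition nbr :: "atom \<Rightarrow> 'u \<Rightarrow> 'u set" where
  "nbr a p = {y. (p, y) \<in> h {a}}"

lemma nbr_subset_U: "a \<in> Atoms n \<Longrightarrow> nbr a p \<subseteq> U"
  using atom_in_U by (auto simp: nbr_def)

lemma nbr_disjoint: "a \<in> Atoms n \<Longrightarrow> b \<in> Atoms n \<Longrightarrow> a \<noteq> b \<Longrightarrow> nbr a p \<inter> nbr b p = {}"
  using h_atoms_disjoint[of a b] by (auto simp: nbr_def)

lemma finite_nbr: "finite U \<Longrightarrow> a \<in> Atoms n \<Longrightarrow> finite (nbr a p)"
  using finite_subset[OF nbr_subset_U] by blast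

lemma card_nbr_ge_if_class_twice:
  assumes fin: "finite U" and a: "a \<in> DivAtoms n" and w: "(p, w) \<in> h {R}"
    and \<alpha>: "\<alpha> \<in> DivAtoms n" and xy: "x \<noteq> y" "x \<in> nbr a p" "y \<in> nbr a p"
    and "(x, w) \<in> h {\<alpha>}" "(y, w) \<in> h {\<alpha>}"
  shows "n + 2 \<le> card (nbr a p)"
proof -
  define C where "C \<beta> = {z \<in> nbr a p. (z, w) \<in> h {\<beta>}}" for \<beta>
  have a': "a \<in> Atoms n" "a \<noteq> One"
    using a by (auto simp: mem_DivAtoms_iff)
  have finite_C: "finite (C \<beta>)" for \<beta>
    using finite_nbr[OF fin a'(1)] by (simp add: C_def)
  have C_nonempty: "C \<beta> \<noteq> {}" if \<beta>: "\<beta> \<in> DivAtoms n" for \<beta>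
  proof -
    have \<beta>': "\<beta> \<in> Atoms n" "\<beta> \<noteq> One"
      using \<beta> by (auto simp: mem_DivAtoms_iff)
    obtain z where "(p, z) \<in> h {a}" "(z, w) \<in> h {\<beta>}"
      using mandatory_triangle[OF a'(1) \<beta>'(1) R_mem_atom_comp[OF a'(2) \<beta>'(2)] w] .
    then show ?thesis by (auto simp: C_def nbr_def)
  qed
  have C_disjoint: "C \<beta> \<inter> C \<gamma> = {}" if "\<beta> \<in> DivAtoms n" "\<gamma> \<in> DivAtoms n" "\<beta> \<noteq> \<gamma>" for \<beta> \<gamma>
    using that h_atoms_disjoint[of \<beta> \<gamma>] by (auto simp: C_def mem_DivAtoms_iff)
  have "{x, y} \<subseteq> C \<alpha>"
    using assms by (simp add: C_def)
  then have "2 \<le> card (C \<alpha>)"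
    using card_mono[OF finite_C] xy(1) by (metis card_2_iff)
  moreover have "card (DivAtoms n - {\<alpha>}) \<le> (\<Sum>\<beta>\<in>DivAtoms n - {\<alpha>}. card (C \<beta>))"
  proof -
    have "\<And>\<beta>. \<beta> \<in> DivAtoms n - {\<alpha>} \<Longrightarrow> 1 \<le> card (C \<beta>)"
      using C_nonempty finite_C by (simp add: Suc_le_eq card_gt_0_iff)
    then show ?thesis
      unfolding card_eq_sum by (rule sum_mono)
  qed
  moreover have "card (DivAtoms n - {\<alpha>}) = n"
    using \<alpha> by (simp add: card_DivAtoms finite_DivAtoms)
  ultimately have "n + 2 \<le> card (C \<alpha>) + (\<Sum>\<beta>\<in>DivAtoms n - {\<alpha>}. card (C \<beta>))"
    by linarith
  also have "\<dots> = (\<Sum>\<beta>\<in>DivAtoms n. card (C \<beta>))"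
    using \<alpha> finite_DivAtoms by (simp add: sum.remove)
  also have "\<dots> = card (\<Union>\<beta>\<in>DivAtoms n. C \<beta>)"
    using finite_DivAtoms finite_C C_disjoint by (simp add: card_UN_disjoint)
  also have "\<dots> \<le> card (nbr a p)"
    using finite_nbr[OF fin a'(1)] by (intro card_mono) (auto simp: C_def)
  finally show ?thesis .
qed

lemma R_edge_in_nbr:
  assumes a: "a \<in> DivAtoms n" and p: "p \<in> U"
  obtains x y where "x \<in> nbr a p" "y \<in> nbr a p" "(x, y) \<in> h {R}"
proof -
  have a': "a \<in> Atoms n" "a \<noteq> One"
    using a by (auto simp: mem_DivAtoms_iff)
  have "(p, p) \<in> h {One}"
    using p by (auto simp: h_One)
  then obtain y where y: "(p, y) \<in> h {a}"
    using mandatory_triangle[OF a'(1) a'(1) One_mem_atom_comp_self[OF a'(2)]] by blast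
  obtain x where "(p, x) \<in> h {a}" "(x, y) \<in> h {R}"
    using mandatory_triangle[OF a'(1) R_mem_Atoms mem_atom_comp_R[OF a'(2) a] y] by blast
  with y that show thesis
    by (simp add: nbr_def)
qed


lemma card_B_nbr_ge_if_other_B:
  assumes fin: "finite U" and p: "p \<in> U" and k: "k \<in> {1..n}" and j: "j \<in> {1..n}" "j \<noteq> k"
  shows "n + 2 \<le> card (nbr (B k) p)"
proof -
  have Bk: "B k \<in> DivAtoms n" and Bj: "B j \<in> DivAtoms n"
    using k j by (simp_all add: mem_DivAtoms_iff)
  obtain x y where x: "x \<in> nbr (B k) p" and y: "y \<in> nbr (B k) p" and xy: "(x, y) \<in> h {R}"
    using R_edge_in_nbr[OF Bk p] .
  have "x \<noteq> y"
    using xy diversity_irrefl[of R] by (auto simp: mem_DivAtoms_iff)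
  obtain w where xw: "(x, w) \<in> h {B j}" and wy: "(w, y) \<in> h {B j}"
    using mandatory_triangle[of "B j" "B j", OF _ _ R_mem_atom_comp xy] j by auto
  have "w \<noteq> p"
    using xw x atom_sym[of "B k" p x] h_atoms_disjoint[of "B j" "B k"] k j by (auto simp: nbr_def)
  then have "(p, w) \<in> h {R}"
    using B_B_path[OF k j(1) _ xw] x by (auto simp: nbr_def)
  then show ?thesis
    using card_nbr_ge_if_class_twice[OF fin Bk _ Bj \<open>x \<noteq> y\<close> x y xw atom_sym[OF _ wy]] j
    by simp
qed

lemma card_B_nbr_ge_if_single_B:
  assumes fin: "finite U" and p: "p \<in> U" and n: "n = 1"
  shows "3 \<le> card (nbr (B 1) p)"
proof -
  have B1: "B 1 \<in> DivAtoms n"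
    using n by (simp add: mem_DivAtoms_iff)
  obtain x y where x: "x \<in> nbr (B 1) p" and y: "y \<in> nbr (B 1) p" and xy: "(x, y) \<in> h {R}"
    using R_edge_in_nbr[OF B1 p] .
  have "x \<noteq> y"
    using xy diversity_irrefl[of R] by (auto simp: mem_DivAtoms_iff)
  obtain w where xw: "(x, w) \<in> h {R}" and wy: "(w, y) \<in> h {R}"
    using mandatory_triangle[OF R_mem_Atoms R_mem_Atoms R_mem_atom_comp xy] by blast
  have "w \<noteq> p"
    using xw x atom_sym[of "B 1" p x] h_atoms_disjoint[of R "B 1"] n by (auto simp: nbr_def)
  obtain \<gamma> where \<gamma>: "\<gamma> \<in> Atoms n" "(p, w) \<in> h {\<gamma>}"
    using pair_in_some_atom[OF p] atom_in_U[OF R_mem_Atoms xw] by blast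
  have "\<gamma> \<noteq> One"
    using \<gamma>(2) \<open>w \<noteq> p\<close> by (auto simp: h_One)
  with \<gamma>(1) n consider "\<gamma> = R" | "\<gamma> = B 1"
    by (auto simp: Atoms_def)
  then show ?thesis
  proof cases
    case 1
    then show ?thesis
      using card_nbr_ge_if_class_twice[OF fin B1 _ _ \<open>x \<noteq> y\<close> x y xw atom_sym[OF _ wy]] \<gamma> n
      by (simp add: mem_DivAtoms_iff)
  next
    case 2
    have "w \<noteq> x" "w \<noteq> y"
      using xw wy diversity_irrefl[of R] by (auto simp: mem_DivAtoms_iff)
    then have "card {x, y, w} = 3"
      using \<open>x \<noteq> y\<close> by simp
    moreover have "card {x, y, w} \<le> card (nbr (B 1) p)"
      using x y \<gamma> 2 n finite_nbr[OF fin, of "B 1" p] by (intro card_mono) (simp_all add: nbr_def)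
    ultimately show ?thesis
      by simp
  qed
qed

lemma card_B_nbr_ge:
  assumes fin: "finite U" and p: "p \<in> U" and k: "k \<in> {1..n}"
  shows "n + 2 \<le> card (nbr (B k) p)"
proof (cases "n = 1")
  case True
  then show ?thesis
    using card_B_nbr_ge_if_single_B[OF fin p] k by simp
next
  case False
  then have "(if k = 1 then 2 else 1) \<in> {1..n}" "(if k = 1 then 2 else 1) \<noteq> k"
    using k by auto
  then show ?thesis
    using card_B_nbr_ge_if_other_B[OF fin p k] by blast
qed

lemma card_UN_B_nbr_ge:
  assumes fin: "finite U" and p: "p \<in> U"
  shows "n * (n + 2) \<le> card (\<Union>k\<in>{1..n}. nbr (B k) p)"
proof -
  have "n * (n + 2) = (\<Sum>k\<in>{1..n}. n + 2)"
    by simp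
  also have "\<dots> \<le> (\<Sum>k\<in>{1..n}. card (nbr (B k) p))"
    using card_B_nbr_ge[OF fin p] by (intro sum_mono) simp
  also have "\<dots> = card (\<Union>k\<in>{1..n}. nbr (B k) p)"
    using finite_nbr[OF fin] nbr_disjoint by (intro card_UN_disjoint[symmetric]) auto
  finally show ?thesis .
qed

lemma UN_B_nbr_subset_closed_R_nbr:
  assumes "j \<in> {1..n}" "y \<in> nbr (B j) x"
  shows "(\<Union>k\<in>{1..n}. nbr (B k) y) \<subseteq> insert x (nbr R x)"
proof
  fix t
  assume "t \<in> (\<Union>k\<in>{1..n}. nbr (B k) y)"
  then obtain k where "k \<in> {1..n}" "(y, t) \<in> h {B k}"
    by (auto simp: nbr_def)
  with assms B_B_path[of j k x y t] show "t \<in> insert x (nbr R x)"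
    by (auto simp: nbr_def)
qed

lemma card_closed_R_nbr_ge:
  assumes fin: "finite U" and n: "1 \<le> n" and x: "x \<in> U"
  shows "n * (n + 2) + 1 \<le> card (insert x (nbr R x))"
proof -
  have B1: "B 1 \<in> Atoms n"
    using n by simp
  have "(x, x) \<in> h {One}"
    using x by (auto simp: h_One)
  then obtain y where xy: "(x, y) \<in> h {B 1}"
    using mandatory_triangle[OF B1 B1 One_mem_atom_comp_self] by blast
  obtain z where xz: "(x, z) \<in> h {R}" and zy: "(z, y) \<in> h {R}"
    using mandatory_triangle[OF R_mem_Atoms R_mem_Atoms mem_atom_comp_R xy] B1
    by (auto simp: mem_DivAtoms_iff)
  let ?By = "\<Union>k\<in>{1..n}. nbr (B k) y"
  have "z \<notin> ?By"
  proof
    assume "z \<in> ?By"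
    then obtain k where "k \<in> {1..n}" "(y, z) \<in> h {B k}"
      by (auto simp: nbr_def)
    then show False
      using atom_sym[OF R_mem_Atoms zy] h_atoms_disjoint[of R "B k"] by auto
  qed
  moreover have "finite ?By"
    using finite_nbr[OF fin] by simp
  ultimately have "card ?By + 1 = card (insert z ?By)"
    by simp
  also have "\<dots> \<le> card (insert x (nbr R x))"
  proof (rule card_mono)
    show "finite (insert x (nbr R x))"
      using finite_nbr[OF fin R_mem_Atoms] by simp
    show "insert z ?By \<subseteq> insert x (nbr R x)"
      using UN_B_nbr_subset_closed_R_nbr[of 1 y x] xy xz n by (auto simp: nbr_def)
  qed
  finally show ?thesis
    using card_UN_B_nbr_ge[OF fin] atom_in_U[OF B1 xy] by fastforce
qed

lemma closed_R_nbr_Int_UN_B_nbr: "insert x (nbr R x) \<inter> (\<Union>k\<in>{1..n}. nbr (B k) x) = {}"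
proof -
  have "x \<notin> nbr (B k) x" if "k \<in> {1..n}" for k
    using that diversity_irrefl[of "B k" x] by (simp add: nbr_def mem_DivAtoms_iff)
  moreover have "nbr R x \<inter> nbr (B k) x = {}" if "k \<in> {1..n}" for k
    using that by (simp add: nbr_disjoint)
  ultimately show ?thesis
    by blast
qed

lemma card_U_ge:
  assumes fin: "finite U" and n: "1 \<le> n"
  shows "2 * n^2 + 4 * n + 1 \<le> card U"
proof -
  obtain x where x: "x \<in> U"
    using U_nonempty by blast
  let ?Rx = "insert x (nbr R x)" and ?Bx = "\<Union>k\<in>{1..n}. nbr (B k) x"
  have "(n * (n + 2) + 1) + n * (n + 2) \<le> card ?Rx + card ?Bx"
    using card_closed_R_nbr_ge[OF fin n x] card_UN_B_nbr_ge[OF fin x] by linarith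
  also have "\<dots> = card (?Rx \<union> ?Bx)"
    using finite_nbr[OF fin] closed_R_nbr_Int_UN_B_nbr
    by (intro card_Un_disjoint[symmetric]) auto
  also have "\<dots> \<le> card U"
    using x nbr_subset_U[of R x] by (intro card_mono[OF fin] Un_least UN_least nbr_subset_U) auto
  finally show ?thesis
    by (simp add: power2_eq_square algebra_simps)
qed

end

theorem mainTheorem8:
  fixes n :: nat
  assumes "n \<ge> 1"
  shows "f n \<ge> enat (2 * n^2 + 4 * n + 1)"
  unfolding f_def
proof (rule Inf_greatest)
  fix \<alpha> assume "\<alpha> \<in> Spec n"
  then obtain U :: "nat set" and h where "is_rep n U h"
    and \<alpha>: "\<alpha> = (if finite U then enat (card U) else \<infinity>)"
    unfolding Spec_def by blast
  then interpret A_representation n U h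
    by unfold_locales
  show "enat (2 * n^2 + 4 * n + 1) \<le> \<alpha>"
    using card_U_ge[OF _ assms] \<alpha> by simp
qed

end
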